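(* Let $v$ be a radial mapping and let $u$ be a Borel function on $D$ having radial limits $\tilde u$ $\mu$-a.e. with respect to $v$, where $\tilde u$ is a real $\mu$-measurable function on $K_0$. Then $u$ has boundary values equal to $\tilde u$.
   Context: Standing setting: $D$ is a bounded domain in $\mathbb R^n$ exhausted by domains $D_r$, $r<0$, with $D_r\Subset D_s$ for $r<s<0$ and $\bigcup_{r<0}D_r=D$; $S_r=\partial D_r$. For each $r<0$, $\mu_r$ is a finite positive regular Borel measure supported on $S_r$, and $\mu_r\to\mu$ weak-* in $C(\overline D)^*$ as $r\to0^-$, where $\mu$ is a finite positive measure supported on $\partial D$; $K_0=\operatorname{supp}\mu$. For a sequence $r_j\nearrow0$ and functions $\phi_j$ on $\operatorname{supp}\mu_{r_j}$, $\{\phi_j\}$ has strong limit values $\phi^*$ (a real $\mu$-measurable function on $K_0$) if for all real $a<b$ and $\varepsilon,\delta>0$ there are $j_0$ and an open set $O\subset\overline D$ containing $\{x\in K_0:a\le\phi^*(x)<b\}$ with $\mu_{r_j}(\{\phi_j<a-\varepsilon\}\cap O)+\mu_{r_j}(\{\phi_j>b+\varepsilon\}\cap O)<\delta$ for $j\ge j_0$. A function $u$ on $D$ has boundary values $u^*$ if for every sequence $r_j\nearrow0$ the sequence $\{u|_{\operatorname{supp}\mu_{r_j}}\}$ has strong limit values with respect to $\{\mu_{r_j}\}$, equal to $u^*$ ($\mu$-a.e.) independently of the sequence. A continuous map $v:K_0\times[0,\varepsilon_0)\to\mathbb R^n$ ($\varepsilon_0>0$) is radial if: (i) $v(\zeta,0)=\zeta$;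 (ii) there is $r_0<0$ such that for every $\zeta\in K_0$ and every $r\in(r_0,0)$ the set $\{t:v(\zeta,t)\in S_r\}$ is nonempty, and the functions $t_r(\zeta)=\inf\{t:v(\zeta,t)\in S_r\}$ are continuous on $K_0$ and converge uniformly to $0$ as $r\to0^-$; (iii) there is $c>0$ such that for every Borel $E\subset K_0$, with $E_r=\{v(\zeta,t_r(\zeta)):\zeta\in E\}$, $\limsup_{r\to0^-}\mu_r(E_r)\le c\mu(E)$; (iv) with $A_r=\{v(\zeta,t_r(\zeta)):\zeta\in K_0\}$, $\limsup_{r\to0^-}\mu_r(S_r\setminus A_r)=0$. A function $u$ on $D$ has radial limits $\tilde u$ $\mu$-a.e. with respect to $v$ if $\lim_{t\to0^+}u(v(\zeta,t))$ exists and equals $\tilde u(\zeta)$ for $\mu$-a.e. $\zeta\in K_0$. *)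

theory Defs
  imports "HOL-Analysis.Analysis"
begin

definition measure_support :: "'a::topological_space measure \<Rightarrow> 'a set" where
  "measure_support M = {x. \<forall>U. open U \<and> x \<in> U \<longrightarrow> emeasure M U > 0}"

definition standing_setting ::
  "'a::euclidean_space set \<Rightarrow> (real \<Rightarrow> 'a set) \<Rightarrow> (real \<Rightarrow> 'a measure) \<Rightarrow> 'a measure \<Rightarrow> bool" where
  "standing_setting D Dr mu mu0 \<longleftrightarrow>
     open D \<and> connected D \<and> D \<noteq> {} \<and> bounded D \<and>
     (\<forall>r<0. open (Dr r) \<and> connected (Dr r) \<and> Dr r \<noteq> {}) \<and>
     (\<forall>r s. r < s \<and> s < 0 \<longrightarrow> compact (closure (Dr r)) \<and> closure (Dr r) \<subseteq> Dr s) \<and>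
     (\<Union>r\<in>{..<0}. Dr r) = D \<and>
     (\<forall>r<0. sets (mu r) = sets borel \<and> finite_measure (mu r) \<and>
            measure_support (mu r) \<subseteq> frontier (Dr r)) \<and>
     sets mu0 = sets borel \<and> finite_measure mu0 \<and> measure_support mu0 \<subseteq> frontier D \<and>
     (\<forall>f::'a \<Rightarrow> real. continuous_on (closure D) f \<longrightarrow>
        ((\<lambda>r. (\<integral>x\<in>closure D. f x \<partial>mu r)) \<longlongrightarrow> (\<integral>x\<in>closure D. f x \<partial>mu0)) (at_left 0))"

definition has_strong_limit_values ::
  "'a::euclidean_space set \<Rightarrow> (real \<Rightarrow> 'a measure) \<Rightarrow> 'a measure \<Rightarrow> (nat \<Rightarrow> real)
   \<Rightarrow> (nat \<Rightarrow> 'a \<Rightarrow> real) \<Rightarrow> ('a \<Rightarrow> real) \<Rightarrow> bool" where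
  "has_strong_limit_values D mu mu0 rj phi phis \<longleftrightarrow>
     phis \<in> borel_measurable (completion mu0) \<and>
     (\<forall>a b \<epsilon> \<delta>. a < b \<and> \<epsilon> > 0 \<and> \<delta> > 0 \<longrightarrow>
        (\<exists>j0 W. openin (top_of_set (closure D)) W \<and>
           {x \<in> measure_support mu0. a \<le> phis x \<and> phis x < b} \<subseteq> W \<and>
           (\<forall>j\<ge>j0.
              outer_measure_of (mu (rj j))
                  ({x \<in> measure_support (mu (rj j)). phi j x < a - \<epsilon>} \<inter> W)
            + outer_measure_of (mu (rj j))
                  ({x \<in> measure_support (mu (rj j)). phi j x > b + \<epsilon>} \<inter> W)
            < ennreal \<delta>)))"

definition has_boundary_values ::
  "'a::euclidean_space set \<Rightarrow> (real \<Rightarrow> 'a measure) \<Rightarrow> 'a measure \<Rightarrow> ('a \<Rightarrow> real) \<Rightarrow> ('a \<Rightarrow> real) \<Rightarrow> bool" where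
  "has_boundary_values D mu mu0 u ustar \<longleftrightarrow>
     (\<forall>rj::nat \<Rightarrow> real. incseq rj \<and> (\<forall>j. rj j < 0) \<and> rj \<longlonglongrightarrow> 0 \<longrightarrow>
        (\<exists>phis. has_strong_limit_values D mu mu0 rj (\<lambda>j. u) phis \<and>
                (AE x in mu0. phis x = ustar x)))"

definition hit_time :: "(real \<Rightarrow> 'a::euclidean_space set) \<Rightarrow> ('a \<Rightarrow> real \<Rightarrow> 'a) \<Rightarrow> real \<Rightarrow> real \<Rightarrow> 'a \<Rightarrow> real" where
  "hit_time Dr v eps0 r \<zeta> = Inf {t \<in> {0..<eps0}. v \<zeta> t \<in> frontier (Dr r)}"

definition radial_map ::
  "(real \<Rightarrow> 'a::euclidean_space set) \<Rightarrow> (real \<Rightarrow> 'a measure) \<Rightarrow> 'a measure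
   \<Rightarrow> ('a \<Rightarrow> real \<Rightarrow> 'a) \<Rightarrow> real \<Rightarrow> bool" where
  "radial_map Dr mu mu0 v eps0 \<longleftrightarrow>
     (let K0 = measure_support mu0; t = hit_time Dr v eps0 in
     eps0 > 0 \<and>
     continuous_on (K0 \<times> {0..<eps0}) (\<lambda>(\<zeta>, s). v \<zeta> s) \<and>
     (\<forall>\<zeta>\<in>K0. v \<zeta> 0 = \<zeta>) \<and>
     (\<exists>r0<0. (\<forall>\<zeta>\<in>K0. \<forall>r\<in>{r0<..<0}. {s \<in> {0..<eps0}. v \<zeta> s \<in> frontier (Dr r)} \<noteq> {}) \<and>
             (\<forall>r\<in>{r0<..<0}. continuous_on K0 (t r)) \<and>
             uniform_limit K0 t (\<lambda>_. 0) (at_left 0)) \<and>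
     (\<exists>c>0. \<forall>E\<in>sets borel. E \<subseteq> K0 \<longrightarrow>
        Limsup (at_left 0) (\<lambda>r. outer_measure_of (mu r) ((\<lambda>\<zeta>. v \<zeta> (t r \<zeta>)) ` E))
          \<le> ennreal c * emeasure mu0 E) \<and>
     Limsup (at_left 0) (\<lambda>r. outer_measure_of (mu r)
          (frontier (Dr r) - (\<lambda>\<zeta>. v \<zeta> (t r \<zeta>)) ` K0)) = 0)"

definition has_radial_limits ::
  "'a::euclidean_space measure \<Rightarrow> ('a \<Rightarrow> real \<Rightarrow> 'a) \<Rightarrow> ('a \<Rightarrow> real) \<Rightarrow> ('a \<Rightarrow> real) \<Rightarrow> bool" where
  "has_radial_limits mu0 v u ut \<longleftrightarrow>
     (AE \<zeta> in mu0. \<zeta> \<in> measure_support mu0 \<longrightarrow> ((\<lambda>t. u (v \<zeta> t)) \<longlongrightarrow> ut \<zeta>) (at_right 0))"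

end

theory Submission
  imports Defs
begin

(* Let P r zeta be the point where the radial curve from zeta in K0 = supp mu0 first hits
   S r.  For a sequence of levels r j increasing to 0 we transport K0 onto S (r j) by
   P (r j).  By the radial limit hypothesis u (P (r j) zeta) tends to ut zeta for a.e.
   zeta, so by continuity from above the points where this convergence is slow after
   time J have small mu0-measure.  The points where ut is far from a given interval
   [a, b] are, by inner regularity, a compact set C up to small measure.  Since P (r j)
   tends uniformly to the identity, the closure of the late transports of C stays away
   from the level set of ut in [a, b]; its complement W is the required neighbourhood.
   On W, points of S (r j) where u is far from [a, b] are transports of the two small
   exceptional sets or are missed by the transport, and conditions (iii) and (iv) of a
   radial map make all three pieces small. *)

(* The support of a measure is closed: its complement is a union of null open sets. *)
lemma closed_measure_support: "closed (measure_support M)"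
proof -
  have "open (- measure_support M)"
  proof (subst open_subopen, intro ballI)
    fix x assume "x \<in> - measure_support M"
    then obtain U where U: "open U" "x \<in> U" "\<not> emeasure M U > 0"
      unfolding measure_support_def by auto
    then have "U \<subseteq> - measure_support M" unfolding measure_support_def by auto
    with U show "\<exists>T. open T \<and> x \<in> T \<and> T \<subseteq> - measure_support M" by blast
  qed
  then show ?thesis by (simp add: closed_def)
qed

(* Outer measure is subadditive (via measurable hulls of both sets). *)
lemma outer_measure_of_Un:
  assumes "A \<subseteq> space M" "B \<subseteq> space M"
  shows "outer_measure_of M (A \<union> B) \<le> outer_measure_of M A + outer_measure_of M B"
proof -
  obtain EA where EA: "EA \<in> sets M" "A \<subseteq> EA" "outer_measure_of M A = emeasure M EA"
    using outer_measure_of_attain[OF assms(1)] by blast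
  obtain EB where EB: "EB \<in> sets M" "B \<subseteq> EB" "outer_measure_of M B = emeasure M EB"
    using outer_measure_of_attain[OF assms(2)] by blast
  have "outer_measure_of M (A \<union> B) \<le> outer_measure_of M (EA \<union> EB)"
    using EA EB by (intro outer_measure_of_mono) auto
  also have "\<dots> = emeasure M (EA \<union> EB)" using EA EB by simp
  also have "\<dots> \<le> emeasure M EA + emeasure M EB" using EA EB by (intro emeasure_subadditive)
  finally show ?thesis using EA EB by simp
qed

lemma outer_measure_of_two_subsets_of_Un3:
  assumes "A \<subseteq> X1 \<union> X2 \<union> X3" "B \<subseteq> X1 \<union> X2 \<union> X3" and "space M = UNIV"
    and "outer_measure_of M X1 < ennreal e" "outer_measure_of M X2 < ennreal e"
    "outer_measure_of M X3 < ennreal e" and "e \<ge> 0"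
  shows "outer_measure_of M A + outer_measure_of M B < ennreal (6 * e)"
proof -
  have "outer_measure_of M (X1 \<union> X2 \<union> X3)
      \<le> outer_measure_of M X1 + outer_measure_of M X2 + outer_measure_of M X3"
    using assms(3) by (intro order.trans[OF outer_measure_of_Un] add_right_mono outer_measure_of_Un) auto
  also have "\<dots> < ennreal (e + e + e)"
    using assms(4-6) by (intro add_mono_ennreal)
  finally have X: "outer_measure_of M (X1 \<union> X2 \<union> X3) < ennreal (3 * e)"
    by simp
  have "outer_measure_of M A + outer_measure_of M B
      \<le> outer_measure_of M (X1 \<union> X2 \<union> X3) + outer_measure_of M (X1 \<union> X2 \<union> X3)"
    using assms(1,2) by (intro add_mono outer_measure_of_mono)
  also have "\<dots> < ennreal (3 * e + 3 * e)" using X by (intro add_mono_ennreal)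
  finally show ?thesis by simp
qed

lemma Inf_hit_mem:
  fixes g :: "real \<Rightarrow> 'a::topological_space"
  assumes cont: "continuous_on {0..<e} g" and F: "closed F"
    and ne: "{t \<in> {0..<e}. g t \<in> F} \<noteq> {}"
  shows "Inf {t \<in> {0..<e}. g t \<in> F} \<in> {t \<in> {0..<e}. g t \<in> F}"
proof -
  let ?S = "{t \<in> {0..<e}. g t \<in> F}"
  have S: "?S = {0..<e} \<inter> g -` F" by auto
  have "closedin (top_of_set {0..<e}) ?S"
    unfolding S by (rule continuous_closedin_preimage[OF cont F])
  then obtain T where T: "closed T" "?S = {0..<e} \<inter> T"
    by (auto simp: closedin_closed)
  have bdd: "bdd_below ?S" by (rule bdd_belowI[of _ 0]) auto
  have "Inf ?S \<in> closure ?S" by (rule closure_contains_Inf[OF ne bdd])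
  also have "\<dots> \<subseteq> T" using T by (intro closure_minimal) auto
  finally have inT: "Inf ?S \<in> T" .
  obtain s where s: "s \<in> ?S" using ne by blast
  have "Inf ?S \<le> s" using s bdd by (intro cInf_lower)
  moreover have "0 \<le> Inf ?S" using ne by (intro cInf_greatest) auto
  ultimately have "Inf ?S \<in> {0..<e}" using s by auto
  with inT T show ?thesis by blast
qed

(* Continuity from above: if a.e. point eventually leaves the sets B j, then the
   tails of their union have arbitrarily small measure (the core of Egorov's theorem). *)
lemma emeasure_tail_union_small:
  assumes "finite_measure M" and B: "\<And>j. B j \<in> sets M"
    and ae: "AE x in M. \<forall>\<^sub>F j in sequentially. x \<notin> B j" and "\<eta> > 0"
  shows "\<exists>J. emeasure M (\<Union>j\<in>{J..}. B j) < ennreal \<eta>"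
proof -
  define N where "N J = (\<Union>j\<in>{J..}. B j)" for J
  have N: "N J \<in> sets M" for J unfolding N_def using B by auto
  have "decseq N" unfolding decseq_def N_def by (intro allI impI UN_mono) auto
  then have "(\<lambda>J. emeasure M (N J)) \<longlonglongrightarrow> emeasure M (\<Inter>J. N J)"
    using N finite_measure.emeasure_finite[OF assms(1)] by (intro Lim_emeasure_decseq) auto
  moreover have "emeasure M (\<Inter>J. N J) = 0"
  proof -
    have null: "AE x in M. x \<notin> (\<Inter>J. N J)"
      using ae by eventually_elim (auto simp: N_def eventually_sequentially)
    have "(\<Inter>J. N J) \<in> sets M" using N by auto
    moreover have "{x \<in> space M. \<not> x \<notin> (\<Inter>J. N J)} = (\<Inter>J. N J)"
      using sets.sets_into_space[OF N[of 0]] by auto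
    ultimately show ?thesis using AE_iff_measurable[of "\<Inter>J. N J" M] null by simp
  qed
  ultimately have "\<forall>\<^sub>F J in sequentially. emeasure M (N J) < ennreal \<eta>"
    using \<open>\<eta> > 0\<close> by (intro order_tendstoD(2)) auto
  then show ?thesis by (auto simp: N_def eventually_sequentially)
qed

lemma convergence_off_small_set:
  fixes f :: "nat \<Rightarrow> 'a::topological_space \<Rightarrow> real" and g :: "'a \<Rightarrow> real"
  assumes M: "sets M = sets borel" "finite_measure M" and K: "K \<in> sets borel"
    and f: "\<And>j. f j \<in> borel_measurable (restrict_space borel K)" and g: "g \<in> borel_measurable borel"
    and conv: "AE x in M. x \<in> K \<longrightarrow> (\<lambda>j. f j x) \<longlonglongrightarrow> g x" and "\<epsilon> > 0" "\<eta> > 0"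
  obtains N J where "N \<in> sets borel" "N \<subseteq> K" "emeasure M N < ennreal \<eta>"
    and "\<And>j x. J \<le> j \<Longrightarrow> x \<in> K \<Longrightarrow> x \<notin> N \<Longrightarrow> \<bar>f j x - g x\<bar> < \<epsilon>"
proof -
  define B where "B j = {x \<in> K. \<epsilon> \<le> \<bar>f j x - g x\<bar>}" for j
  have B: "B j \<in> sets borel" for j
  proof -
    have "(\<lambda>x. \<bar>f j x - g x\<bar>) \<in> borel_measurable (restrict_space borel K)"
      using f measurable_restrict_space1[OF g] by (intro borel_measurable_abs borel_measurable_diff)
    then have "{x \<in> space (restrict_space borel K). \<epsilon> \<le> \<bar>f j x - g x\<bar>} \<in> sets (restrict_space borel K)"
      unfolding borel_measurable_iff_ge by blast
    then show ?thesis using K by (simp add: B_def sets_restrict_space_iff space_restrict_space)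
  qed
  then have BM: "B j \<in> sets M" for j using M(1) by simp
  have "AE x in M. \<forall>\<^sub>F j in sequentially. x \<notin> B j"
    using conv
  proof eventually_elim
    case (elim x)
    show ?case
    proof (cases "x \<in> K")
      case True
      then have "\<forall>\<^sub>F j in sequentially. dist (f j x) (g x) < \<epsilon>"
        using elim \<open>\<epsilon> > 0\<close> by (intro tendstoD) auto
      then show ?thesis by eventually_elim (auto simp: B_def dist_real_def)
    qed (simp add: B_def)
  qed
  from emeasure_tail_union_small[OF M(2) BM this \<open>\<eta> > 0\<close>]
  obtain J where J: "emeasure M (\<Union>j\<in>{J..}. B j) < ennreal \<eta>" by blast
  show thesis
  proof (rule that[of "\<Union>j\<in>{J..}. B j" J])
    show "(\<Union>j\<in>{J..}. B j) \<in> sets borel" using B by (intro sets.countable_UN') auto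
    show "(\<Union>j\<in>{J..}. B j) \<subseteq> K" by (auto simp: B_def)
    show "\<bar>f j x - g x\<bar> < \<epsilon>" if "J \<le> j" "x \<in> K" "x \<notin> (\<Union>j\<in>{J..}. B j)" for j x
      using that by (auto simp: B_def not_le)
  qed (fact J)
qed

lemma inner_regular_compact_approx:
  fixes M :: "'a::{second_countable_topology, complete_space} measure"
  assumes "sets M = sets borel" "finite_measure M" "B \<in> sets borel" "\<eta> > 0"
  obtains C where "compact C" "C \<subseteq> B" "emeasure M (B - C) < ennreal \<eta>"
proof -
  have fin: "emeasure M X \<noteq> \<infinity>" for X
    using finite_measure.emeasure_finite[OF assms(2)] by (simp add: top_ennreal_def[symmetric])
  have sup: "emeasure M B = (SUP C \<in> {C. C \<subseteq> B \<and> compact C}. emeasure M C)"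
    by (rule inner_regular[OF assms(1) fin assms(3)])
  have "{C. C \<subseteq> B \<and> compact C} \<noteq> {}" using compact_empty by blast
  from SUP_approx_ennreal[OF \<open>\<eta> > 0\<close> this sup fin]
  obtain C where C: "C \<subseteq> B" "compact C" and less: "emeasure M B < emeasure M C + ennreal \<eta>"
    by blast
  have "emeasure M C + emeasure M (B - C) = emeasure M B"
    using C assms(1,3) borel_compact[OF C(2)] by (subst plus_emeasure) (auto simp: Un_absorb1)
  with less have "emeasure M C + emeasure M (B - C) < emeasure M C + ennreal \<eta>" by simp
  then have "emeasure M (B - C) < ennreal \<eta>" by (simp add: ennreal_add_left_cancel_less)
  with C that show ?thesis by blast
qed

lemma notin_closure_tail_images:
  fixes P :: "nat \<Rightarrow> 'a \<Rightarrow> 'a::metric_space"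
  assumes "compact C" "C \<subseteq> K" "x \<in> K" "x \<notin> C"
    and close: "\<And>\<rho>. \<rho> > 0 \<Longrightarrow> \<forall>\<^sub>F j in sequentially. \<forall>\<zeta>\<in>K. dist (P j \<zeta>) \<zeta> < \<rho>"
    and F: "\<And>j. closed (F j)" "\<And>j. F j \<inter> K = {}" "\<And>j. P j ` K \<subseteq> F j"
  shows "x \<notin> closure (\<Union>j\<in>{j0..}. P j ` C)"
proof -
  have "open (- C)" using compact_imp_closed[OF assms(1)] by (simp add: open_Compl)
  then obtain d where d: "d > 0" "ball x d \<subseteq> - C"
    using assms(4) by (meson ComplI open_contains_ball)
  obtain N where N: "\<And>j \<zeta>. j \<ge> N \<Longrightarrow> \<zeta> \<in> K \<Longrightarrow> dist (P j \<zeta>) \<zeta> < d/2"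
    using close[of "d/2"] d(1) by (auto simp: eventually_sequentially)
  define R where "R = (\<Union>j\<in>{j0..<N}. F j) \<union> - ball x (d/2)"
  have inR: "P j \<zeta> \<in> R" if "j \<ge> j0" "\<zeta> \<in> C" for j \<zeta>
  proof (cases "j < N")
    case True
    have "P j \<zeta> \<in> F j" using F(3)[of j] that(2) assms(2) by blast
    with True that(1) show ?thesis by (auto simp: R_def)
  next
    case False
    then have "dist (P j \<zeta>) \<zeta> < d/2" using N that(2) assms(2) by auto
    moreover have "dist x \<zeta> \<ge> d" using d(2) that(2) by (auto simp: subset_eq)
    ultimately have "dist x (P j \<zeta>) \<ge> d/2" using dist_triangle[of x \<zeta> "P j \<zeta>"] by simp
    then show ?thesis by (auto simp: R_def)
  qed
  have "(\<Union>j\<in>{j0..}. P j ` C) \<subseteq> R" using inR by auto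
  moreover have "closed R" unfolding R_def using F(1) by (intro closed_Un closed_UN) auto
  ultimately have "closure (\<Union>j\<in>{j0..}. P j ` C) \<subseteq> R" by (rule closure_minimal)
  moreover have "x \<notin> R" using F(2) assms(3) d(1) by (auto simp: R_def)
  ultimately show ?thesis by blast
qed

lemma curves_approach_start_uniformly:
  fixes v :: "'a::metric_space \<Rightarrow> real \<Rightarrow> 'a"
  assumes "compact K" "e > 0" and cont: "continuous_on (K \<times> {0..<e}) (\<lambda>(\<zeta>, s). v \<zeta> s)"
    and start: "\<And>\<zeta>. \<zeta> \<in> K \<Longrightarrow> v \<zeta> 0 = \<zeta>"
    and nonneg: "\<forall>\<^sub>F j in F. \<forall>\<zeta>\<in>K. t j \<zeta> \<ge> 0" and lim: "uniform_limit K t (\<lambda>_. 0) F"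
    and "\<rho> > 0"
  shows "\<forall>\<^sub>F j in F. \<forall>\<zeta>\<in>K. dist (v \<zeta> (t j \<zeta>)) \<zeta> < \<rho>"
proof -
  let ?V = "\<lambda>(\<zeta>, s). v \<zeta> s"
  have "uniformly_continuous_on (K \<times> {0..e/2}) ?V"
    using assms(1,2) by (intro compact_uniformly_continuous continuous_on_subset[OF cont]
        compact_Times) auto
  then obtain d where d: "d > 0" and dV: "\<And>x x'. x \<in> K \<times> {0..e/2} \<Longrightarrow> x' \<in> K \<times> {0..e/2} \<Longrightarrow>
      dist x' x < d \<Longrightarrow> dist (?V x') (?V x) < \<rho>"
    unfolding uniformly_continuous_on_def using \<open>\<rho> > 0\<close> by metis
  have "min d (e/2) > 0" using d \<open>e > 0\<close> by simp
  then have "\<forall>\<^sub>F j in F. \<forall>\<zeta>\<in>K. dist (t j \<zeta>) 0 < min d (e/2)"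
    using lim unfolding uniform_limit_iff by blast
  with nonneg show ?thesis
  proof eventually_elim
    case (elim j)
    show ?case
    proof
      fix \<zeta> assume "\<zeta> \<in> K"
      with elim have t: "0 \<le> t j \<zeta>" "t j \<zeta> < d" "t j \<zeta> < e/2" by (auto simp: dist_real_def)
      have "dist (\<zeta>, t j \<zeta>) (\<zeta>, 0) < d" using t by (simp add: dist_Pair_Pair dist_real_def)
      then have "dist (?V (\<zeta>, t j \<zeta>)) (?V (\<zeta>, 0)) < \<rho>"
        using \<open>\<zeta> \<in> K\<close> t \<open>e > 0\<close> by (intro dV) auto
      then show "dist (v \<zeta> (t j \<zeta>)) \<zeta> < \<rho>" using start[OF \<open>\<zeta> \<in> K\<close>] by simp
    qed
  qed
qed

lemma measurable_comp_continuous_restrict: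
  assumes "continuous_on K P" "P ` K \<subseteq> D" "u \<in> borel_measurable (restrict_space borel D)"
  shows "(\<lambda>\<zeta>. u (P \<zeta>)) \<in> borel_measurable (restrict_space borel K)"
proof -
  have "P \<in> restrict_space borel K \<rightarrow>\<^sub>M restrict_space borel D"
    using assms(1,2) by (intro measurable_restrict_space2 borel_measurable_continuous_on_restrict)
      (auto simp: space_restrict_space)
  from measurable_comp[OF this assms(3)] show ?thesis by (simp add: o_def)
qed

(* Outside the exceptional sets, the value of u
   at the transported point P zeta is close to g zeta, which lies near [a, b]; so a point
   of S where u is far from [a, b] is either not a transported point, or the transport of
   a point of B - C or of N (the transports of C are excluded from W). *)
lemma level_sets_covered:
  fixes u g :: "'a \<Rightarrow> real"
  assumes "S \<subseteq> F"
    and good: "\<And>\<zeta>. \<zeta> \<in> K \<Longrightarrow> \<zeta> \<notin> N \<Longrightarrow> \<bar>u (P \<zeta>) - g \<zeta>\<bar> < \<epsilon>/2"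
    and range: "\<And>\<zeta>. \<zeta> \<in> K \<Longrightarrow> \<zeta> \<notin> B \<Longrightarrow> a - \<epsilon>/2 \<le> g \<zeta> \<and> g \<zeta> \<le> b + \<epsilon>/2"
    and "W \<inter> P ` C = {}"
  shows "{x \<in> S. u x < a - \<epsilon> \<or> b + \<epsilon> < u x} \<inter> W \<subseteq> (F - P ` K) \<union> P ` (B - C) \<union> P ` N"
proof
  fix x assume x: "x \<in> {x \<in> S. u x < a - \<epsilon> \<or> b + \<epsilon> < u x} \<inter> W"
  show "x \<in> (F - P ` K) \<union> P ` (B - C) \<union> P ` N"
  proof (cases "x \<in> P ` K")
    case True
    then obtain \<zeta> where \<zeta>: "\<zeta> \<in> K" "x = P \<zeta>" by blast
    have "\<zeta> \<notin> C" using x \<zeta>(2) \<open>W \<inter> P ` C = {}\<close> by blast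
    moreover have "\<zeta> \<in> B \<or> \<zeta> \<in> N"
    proof (rule ccontr)
      assume "\<not> (\<zeta> \<in> B \<or> \<zeta> \<in> N)"
      then have "\<bar>u x - g \<zeta>\<bar> < \<epsilon>/2" "a - \<epsilon>/2 \<le> g \<zeta>" "g \<zeta> \<le> b + \<epsilon>/2"
        using good[OF \<zeta>(1)] range[OF \<zeta>(1)] \<zeta>(2) by auto
      moreover have "u x < a - \<epsilon> \<or> b + \<epsilon> < u x" using x by blast
      ultimately show False unfolding abs_less_iff by linarith
    qed
    ultimately show ?thesis using \<zeta>(2) by blast
  qed (use x \<open>S \<subseteq> F\<close> in blast)
qed

lemma strong_limit_values_from_transport:
  fixes D :: "'a::euclidean_space set" and mu :: "real \<Rightarrow> 'a measure" and mu0 :: "'a measure"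
    and rj :: "nat \<Rightarrow> real" and P :: "nat \<Rightarrow> 'a \<Rightarrow> 'a" and F :: "nat \<Rightarrow> 'a set"
    and u ub :: "'a \<Rightarrow> real" and c :: real and K :: "'a set"
  assumes K_def: "K = measure_support mu0"
    and mu0: "sets mu0 = sets borel" "finite_measure mu0"
    and K: "compact K" "K \<subseteq> closure D"
    and F: "\<And>j. closed (F j)" "\<And>j. F j \<inter> K = {}" "\<And>j. P j ` K \<subseteq> F j"
    and mu: "\<And>j. space (mu (rj j)) = UNIV" "\<And>j. measure_support (mu (rj j)) \<subseteq> F j"
    and close: "\<And>\<rho>. \<rho> > 0 \<Longrightarrow> \<forall>\<^sub>F j in sequentially. \<forall>\<zeta>\<in>K. dist (P j \<zeta>) \<zeta> < \<rho>"
    and meas: "ub \<in> borel_measurable borel"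
      "\<And>j. (\<lambda>\<zeta>. u (P j \<zeta>)) \<in> borel_measurable (restrict_space borel K)"
    and conv: "AE \<zeta> in mu0. \<zeta> \<in> K \<longrightarrow> (\<lambda>j. u (P j \<zeta>)) \<longlonglongrightarrow> ub \<zeta>"
    and transport: "c > 0" "\<And>E \<eta>. E \<in> sets borel \<Longrightarrow> E \<subseteq> K \<Longrightarrow> ennreal c * emeasure mu0 E < \<eta> \<Longrightarrow>
        \<forall>\<^sub>F j in sequentially. outer_measure_of (mu (rj j)) (P j ` E) < \<eta>"
    and missed: "\<And>\<eta>. \<eta> > 0 \<Longrightarrow>
        \<forall>\<^sub>F j in sequentially. outer_measure_of (mu (rj j)) (F j - P j ` K) < \<eta>"
  shows "has_strong_limit_values D mu mu0 rj (\<lambda>j. u) ub"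
  unfolding has_strong_limit_values_def
proof (intro conjI allI impI)
  have "ub \<in> borel_measurable mu0" using meas(1) by (simp add: measurable_cong_sets[OF mu0(1) refl])
  then show "ub \<in> borel_measurable (completion mu0)" by (rule measurable_completion)
  fix a b \<epsilon> \<delta> :: real
  assume "a < b \<and> 0 < \<epsilon> \<and> 0 < \<delta>"
  then have e: "\<epsilon> > 0" and d: "\<delta> > 0" by auto
  define \<eta> where "\<eta> = \<delta> / (6 * c)"
  have \<eta>: "\<eta> > 0" "ennreal c * ennreal \<eta> = ennreal (\<delta>/6)"
    using transport(1) d by (auto simp: \<eta>_def ennreal_mult[symmetric])
  have small: "ennreal c * emeasure mu0 E < ennreal (\<delta>/6)" if "emeasure mu0 E < ennreal \<eta>" for E
    using ennreal_mult_strict_left_mono[OF that, of "ennreal c"] transport(1) \<eta>(2) by simp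
  obtain J1 N where N: "N \<in> sets borel" "N \<subseteq> K" "emeasure mu0 N < ennreal \<eta>"
    and good: "\<And>j \<zeta>. J1 \<le> j \<Longrightarrow> \<zeta> \<in> K \<Longrightarrow> \<zeta> \<notin> N \<Longrightarrow> \<bar>u (P j \<zeta>) - ub \<zeta>\<bar> < \<epsilon>/2"
    by (rule convergence_off_small_set[OF mu0 borel_compact[OF K(1)] meas(2) meas(1) conv
        half_gt_zero[OF e] \<eta>(1)]) blast
  define B where "B = {\<zeta> \<in> K. ub \<zeta> < a - \<epsilon>/2 \<or> b + \<epsilon>/2 < ub \<zeta>}"
  have [measurable]: "ub \<in> borel_measurable borel" by (rule meas(1))
  have "{\<zeta> \<in> space borel. ub \<zeta> < a - \<epsilon>/2 \<or> b + \<epsilon>/2 < ub \<zeta>} \<in> sets borel" by measurable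
  then have "B \<in> sets borel" using borel_compact[OF K(1)] unfolding B_def by (simp add: Collect_conj_eq)
  then obtain C where C: "compact C" "C \<subseteq> B" "emeasure mu0 (B - C) < ennreal \<eta>"
    by (rule inner_regular_compact_approx[OF mu0 _ \<eta>(1)])
  have CK: "C \<subseteq> K" using C(2) by (auto simp: B_def)
  have "B - C \<in> sets borel" "B - C \<subseteq> K"
    using \<open>B \<in> sets borel\<close> borel_compact[OF C(1)] by (auto simp: B_def)
  then have "\<forall>\<^sub>F j in sequentially. outer_measure_of (mu (rj j)) (P j ` (B - C)) < ennreal (\<delta>/6)"
      "\<forall>\<^sub>F j in sequentially. outer_measure_of (mu (rj j)) (P j ` N) < ennreal (\<delta>/6)"
    using transport(2) N small[OF C(3)] small[OF N(3)] by blast+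
  moreover have "\<forall>\<^sub>F j in sequentially. outer_measure_of (mu (rj j)) (F j - P j ` K) < ennreal (\<delta>/6)"
    using missed d by simp
  ultimately obtain J2 where J2: "\<And>j. j \<ge> J2 \<Longrightarrow>
      outer_measure_of (mu (rj j)) (F j - P j ` K) < ennreal (\<delta>/6) \<and>
      outer_measure_of (mu (rj j)) (P j ` (B - C)) < ennreal (\<delta>/6) \<and>
      outer_measure_of (mu (rj j)) (P j ` N) < ennreal (\<delta>/6)"
    unfolding eventually_sequentially by (metis max.bounded_iff)
  define j0 where "j0 = max J1 J2"
  define W where "W = closure D - closure (\<Union>j\<in>{j0..}. P j ` C)"
  show "\<exists>j0 W. openin (top_of_set (closure D)) W \<and>
      {x \<in> measure_support mu0. a \<le> ub x \<and> ub x < b} \<subseteq> W \<and>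
      (\<forall>j\<ge>j0. outer_measure_of (mu (rj j)) ({x \<in> measure_support (mu (rj j)). u x < a - \<epsilon>} \<inter> W)
        + outer_measure_of (mu (rj j)) ({x \<in> measure_support (mu (rj j)). u x > b + \<epsilon>} \<inter> W)
        < ennreal \<delta>)"
  proof (intro exI[of _ j0] exI[of _ W] conjI allI impI)
    show "openin (top_of_set (closure D)) W"
      unfolding openin_open W_def by (intro exI[of _ "- closure (\<Union>j\<in>{j0..}. P j ` C)"]) auto
    show "{x \<in> measure_support mu0. a \<le> ub x \<and> ub x < b} \<subseteq> W"
    proof
      fix x assume x: "x \<in> {x \<in> measure_support mu0. a \<le> ub x \<and> ub x < b}"
      then have "x \<in> K" "x \<notin> C" using C(2) e by (auto simp: K_def B_def)
      then have "x \<notin> closure (\<Union>j\<in>{j0..}. P j ` C)"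
        by (rule notin_closure_tail_images[OF C(1) CK _ _ close F])
      then show "x \<in> W" using K(2) \<open>x \<in> K\<close> by (auto simp: W_def)
    qed
    fix j assume "j0 \<le> j"
    have "{x \<in> measure_support (mu (rj j)). u x < a - \<epsilon> \<or> b + \<epsilon> < u x} \<inter> W
        \<subseteq> (F j - P j ` K) \<union> P j ` (B - C) \<union> P j ` N"
    proof (rule level_sets_covered[OF mu(2)])
      show "\<bar>u (P j \<zeta>) - ub \<zeta>\<bar> < \<epsilon>/2" if "\<zeta> \<in> K" "\<zeta> \<notin> N" for \<zeta>
        using good[OF _ that] \<open>j0 \<le> j\<close> by (simp add: j0_def)
      show "a - \<epsilon>/2 \<le> ub \<zeta> \<and> ub \<zeta> \<le> b + \<epsilon>/2" if "\<zeta> \<in> K" "\<zeta> \<notin> B" for \<zeta>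
        using that by (auto simp: B_def)
      have "P j ` C \<subseteq> closure (\<Union>i\<in>{j0..}. P i ` C)"
        using \<open>j0 \<le> j\<close> by (intro subset_trans[OF _ closure_subset]) auto
      then show "W \<inter> P j ` C = {}" unfolding W_def by blast
    qed
    then have sub: "{x \<in> measure_support (mu (rj j)). u x < a - \<epsilon>} \<inter> W
          \<subseteq> (F j - P j ` K) \<union> P j ` (B - C) \<union> P j ` N"
        "{x \<in> measure_support (mu (rj j)). u x > b + \<epsilon>} \<inter> W
          \<subseteq> (F j - P j ` K) \<union> P j ` (B - C) \<union> P j ` N"
      by blast+
    have "j \<ge> J2" using \<open>j0 \<le> j\<close> by (simp add: j0_def)
    then have "outer_measure_of (mu (rj j)) (F j - P j ` K) < ennreal (\<delta>/6)"
      "outer_measure_of (mu (rj j)) (P j ` (B - C)) < ennreal (\<delta>/6)"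
      "outer_measure_of (mu (rj j)) (P j ` N) < ennreal (\<delta>/6)"
      using J2 by blast+
    from outer_measure_of_two_subsets_of_Un3[OF sub mu(1) this] d
    show "outer_measure_of (mu (rj j)) ({x \<in> measure_support (mu (rj j)). u x < a - \<epsilon>} \<inter> W)
        + outer_measure_of (mu (rj j)) ({x \<in> measure_support (mu (rj j)). u x > b + \<epsilon>} \<inter> W)
        < ennreal \<delta>"
      by simp
  qed
qed

definition hit_point ::
  "(real \<Rightarrow> 'a::euclidean_space set) \<Rightarrow> ('a \<Rightarrow> real \<Rightarrow> 'a) \<Rightarrow> real \<Rightarrow> real \<Rightarrow> 'a \<Rightarrow> 'a" where
  "hit_point Dr v eps0 r \<zeta> = v \<zeta> (hit_time Dr v eps0 r \<zeta>)"

(* Each S r lies inside D, since closure (Dr r) lies in Dr (r/2). *)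
lemma standing_setting_frontier_inside:
  assumes "standing_setting D Dr mu mu0" "r < 0"
  shows "frontier (Dr r) \<subseteq> D"
proof -
  have "frontier (Dr r) \<subseteq> closure (Dr r)" by (simp add: frontier_def)
  also have "\<dots> \<subseteq> Dr (r/2)" using assms unfolding standing_setting_def by simp
  also have "\<dots> \<subseteq> D" using assms unfolding standing_setting_def by auto
  finally show ?thesis .
qed

lemma standing_setting_boundary_support:
  assumes "standing_setting D Dr mu mu0"
  shows "compact (measure_support mu0)" "measure_support mu0 \<subseteq> closure D"
    "measure_support mu0 \<inter> D = {}"
proof -
  have D: "open D" "bounded D" and sub: "measure_support mu0 \<subseteq> frontier D"
    using assms unfolding standing_setting_def by auto
  show cl: "measure_support mu0 \<subseteq> closure D" using sub by (auto simp: frontier_def)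
  show "measure_support mu0 \<inter> D = {}" using sub D(1) by (auto simp: frontier_def interior_open)
  have "bounded (measure_support mu0)" using bounded_subset[OF bounded_closure[OF D(2)] cl] .
  then show "compact (measure_support mu0)"
    using closed_measure_support by (simp add: compact_eq_bounded_closed)
qed

lemma radial_map_curves:
  assumes "radial_map Dr mu mu0 v eps0"
  shows "eps0 > 0" and "continuous_on (measure_support mu0 \<times> {0..<eps0}) (\<lambda>(\<zeta>, s). v \<zeta> s)"
    and "\<And>\<zeta>. \<zeta> \<in> measure_support mu0 \<Longrightarrow> v \<zeta> 0 = \<zeta>"
    and "uniform_limit (measure_support mu0) (hit_time Dr v eps0) (\<lambda>_. 0) (at_left 0)"
  using assms unfolding radial_map_def Let_def by blast+

lemma radial_map_hitting:
  assumes "radial_map Dr mu mu0 v eps0"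
  shows "\<exists>r0<0. (\<forall>\<zeta>\<in>measure_support mu0. \<forall>r\<in>{r0<..<0}.
      {s \<in> {0..<eps0}. v \<zeta> s \<in> frontier (Dr r)} \<noteq> {}) \<and>
    (\<forall>r\<in>{r0<..<0}. continuous_on (measure_support mu0) (hit_time Dr v eps0 r))"
  using assms unfolding radial_map_def Let_def by blast

lemma radial_map_hit_points:
  fixes D :: "'a::euclidean_space set"
  assumes S: "standing_setting D Dr mu mu0" and R: "radial_map Dr mu mu0 v eps0"
  shows "\<exists>r0<0. (\<forall>r\<in>{r0<..<0}. \<forall>\<zeta>\<in>measure_support mu0.
      hit_time Dr v eps0 r \<zeta> \<in> {0<..<eps0} \<and> hit_point Dr v eps0 r \<zeta> \<in> frontier (Dr r)) \<and>
    (\<forall>r\<in>{r0<..<0}. continuous_on (measure_support mu0) (hit_point Dr v eps0 r))"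
proof -
  let ?K = "measure_support mu0"
  note vcont = radial_map_curves(2)[OF R] and start = radial_map_curves(3)[OF R]
  obtain r0 where "r0 < 0"
    and ne: "\<And>\<zeta> r. \<zeta> \<in> ?K \<Longrightarrow> r \<in> {r0<..<0} \<Longrightarrow> {s \<in> {0..<eps0}. v \<zeta> s \<in> frontier (Dr r)} \<noteq> {}"
    and tcont: "\<And>r. r \<in> {r0<..<0} \<Longrightarrow> continuous_on ?K (hit_time Dr v eps0 r)"
    using radial_map_hitting[OF R] by blast
  have curve: "continuous_on {0..<eps0} (v \<zeta>)" if "\<zeta> \<in> ?K" for \<zeta>
  proof -
    have "continuous_on {0..<eps0} ((\<lambda>(\<zeta>, s). v \<zeta> s) \<circ> (\<lambda>s. (\<zeta>, s)))"
      using that by (intro continuous_on_compose continuous_on_subset[OF vcont] continuous_intros) auto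
    then show ?thesis by (simp add: o_def)
  qed
  have hit: "hit_time Dr v eps0 r \<zeta> \<in> {0..<eps0} \<and> hit_point Dr v eps0 r \<zeta> \<in> frontier (Dr r)"
    if "r \<in> {r0<..<0}" "\<zeta> \<in> ?K" for r \<zeta>
    using Inf_hit_mem[OF curve[OF that(2)] frontier_closed ne[OF that(2,1)]]
    unfolding hit_point_def hit_time_def by auto
  txt \<open>The curve starts on the boundary of \<open>D\<close> but hits \<open>S r\<close> inside \<open>D\<close>, so it needs positive time.\<close>
  have pos: "hit_time Dr v eps0 r \<zeta> \<noteq> 0" if "r \<in> {r0<..<0}" "\<zeta> \<in> ?K" for r \<zeta>
  proof
    assume "hit_time Dr v eps0 r \<zeta> = 0"
    then have "\<zeta> \<in> frontier (Dr r)" using hit[OF that] start[OF that(2)] by (simp add: hit_point_def)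
    then have "\<zeta> \<in> D" using standing_setting_frontier_inside[OF S] that(1) by auto
    then show False using standing_setting_boundary_support(3)[OF S] that(2) by blast
  qed
  have cont: "continuous_on ?K (hit_point Dr v eps0 r)" if "r \<in> {r0<..<0}" for r
  proof -
    have "continuous_on ?K (\<lambda>\<zeta>. (\<lambda>(\<zeta>, s). v \<zeta> s) (\<zeta>, hit_time Dr v eps0 r \<zeta>))"
      by (rule continuous_on_compose2[OF vcont])
        (use hit[OF that] in \<open>auto intro!: continuous_intros tcont[OF that]\<close>)
    then show ?thesis by (simp add: hit_point_def)
  qed
  have "\<forall>r\<in>{r0<..<0}. \<forall>\<zeta>\<in>?K.
      hit_time Dr v eps0 r \<zeta> \<in> {0<..<eps0} \<and> hit_point Dr v eps0 r \<zeta> \<in> frontier (Dr r)"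
    using hit pos by fastforce
  with cont \<open>r0 < 0\<close> show ?thesis by blast
qed

lemma radial_map_hit_points_uniform:
  fixes D :: "'a::euclidean_space set"
  assumes S: "standing_setting D Dr mu mu0" and R: "radial_map Dr mu mu0 v eps0" and "\<rho> > 0"
  shows "\<forall>\<^sub>F r in at_left 0. \<forall>\<zeta>\<in>measure_support mu0. dist (hit_point Dr v eps0 r \<zeta>) \<zeta> < \<rho>"
proof -
  obtain r0 where "r0 < 0" and hit: "\<And>r \<zeta>. r \<in> {r0<..<0} \<Longrightarrow> \<zeta> \<in> measure_support mu0 \<Longrightarrow>
      hit_time Dr v eps0 r \<zeta> \<in> {0<..<eps0}"
    using radial_map_hit_points[OF S R] by blast
  have "\<forall>\<^sub>F r in at_left 0. \<forall>\<zeta>\<in>measure_support mu0. hit_time Dr v eps0 r \<zeta> \<ge> 0"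
    using eventually_at_left_real[OF \<open>r0 < 0\<close>] by eventually_elim (use hit in fastforce)
  from curves_approach_start_uniformly[OF standing_setting_boundary_support(1)[OF S]
      radial_map_curves(1-3)[OF R] this radial_map_curves(4)[OF R] \<open>\<rho> > 0\<close>]
  show ?thesis unfolding hit_point_def .
qed

lemma radial_map_transport:
  assumes "radial_map Dr mu mu0 v eps0"
  obtains c :: real where "c > 0"
    and "\<And>E \<eta>. E \<in> sets borel \<Longrightarrow> E \<subseteq> measure_support mu0 \<Longrightarrow> ennreal c * emeasure mu0 E < \<eta> \<Longrightarrow>
      \<forall>\<^sub>F r in at_left 0. outer_measure_of (mu r) (hit_point Dr v eps0 r ` E) < \<eta>"
proof -
  obtain c :: real where "c > 0" and lim: "\<And>E. E \<in> sets borel \<Longrightarrow> E \<subseteq> measure_support mu0 \<Longrightarrow>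
      Limsup (at_left 0) (\<lambda>r. outer_measure_of (mu r) (hit_point Dr v eps0 r ` E))
        \<le> ennreal c * emeasure mu0 E"
    using assms unfolding radial_map_def Let_def hit_point_def[abs_def] by blast
  show thesis
  proof (rule that[OF \<open>c > 0\<close>])
    fix E \<eta> assume E: "E \<in> sets borel" "E \<subseteq> measure_support mu0" "ennreal c * emeasure mu0 E < \<eta>"
    show "\<forall>\<^sub>F r in at_left 0. outer_measure_of (mu r) (hit_point Dr v eps0 r ` E) < \<eta>"
      using Limsup_lessD[OF le_less_trans[OF lim[OF E(1,2)] E(3)]] .
  qed
qed

lemma radial_map_missed:
  assumes "radial_map Dr mu mu0 v eps0" "\<eta> > 0"
  shows "\<forall>\<^sub>F r in at_left 0. outer_measure_of (mu r)
      (frontier (Dr r) - hit_point Dr v eps0 r ` measure_support mu0) < \<eta>"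
proof (rule Limsup_lessD)
  have "Limsup (at_left 0) (\<lambda>r. outer_measure_of (mu r)
      (frontier (Dr r) - hit_point Dr v eps0 r ` measure_support mu0)) = 0"
    using assms(1) unfolding radial_map_def Let_def hit_point_def[abs_def] by blast
  then show "Limsup (at_left 0) (\<lambda>r. outer_measure_of (mu r)
      (frontier (Dr r) - hit_point Dr v eps0 r ` measure_support mu0)) < \<eta>"
    using assms(2) by simp
qed

lemma has_strong_limit_values_shift:
  assumes "has_strong_limit_values D mu mu0 (\<lambda>j. rj (j + k)) (\<lambda>j. u) phis"
  shows "has_strong_limit_values D mu mu0 rj (\<lambda>j. u) phis"
  unfolding has_strong_limit_values_def
proof (intro conjI allI impI)
  show "phis \<in> borel_measurable (completion mu0)"
    using assms unfolding has_strong_limit_values_def by blast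
  fix a b \<epsilon> \<delta> :: real assume "a < b \<and> \<epsilon> > 0 \<and> \<delta> > 0"
  then obtain j0 W where "openin (top_of_set (closure D)) W"
      "{x \<in> measure_support mu0. a \<le> phis x \<and> phis x < b} \<subseteq> W"
      and late: "\<And>j. j \<ge> j0 \<Longrightarrow>
        outer_measure_of (mu (rj (j + k))) ({x \<in> measure_support (mu (rj (j + k))). u x < a - \<epsilon>} \<inter> W)
      + outer_measure_of (mu (rj (j + k))) ({x \<in> measure_support (mu (rj (j + k))). u x > b + \<epsilon>} \<inter> W)
        < ennreal \<delta>"
    using assms unfolding has_strong_limit_values_def by meson
  moreover have "\<forall>j\<ge>j0 + k.
        outer_measure_of (mu (rj j)) ({x \<in> measure_support (mu (rj j)). u x < a - \<epsilon>} \<inter> W)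
      + outer_measure_of (mu (rj j)) ({x \<in> measure_support (mu (rj j)). u x > b + \<epsilon>} \<inter> W)
        < ennreal \<delta>"
  proof (intro allI impI)
    fix j assume "j \<ge> j0 + k"
    then have "j - k \<ge> j0" "j - k + k = j" by auto
    then show "outer_measure_of (mu (rj j)) ({x \<in> measure_support (mu (rj j)). u x < a - \<epsilon>} \<inter> W)
      + outer_measure_of (mu (rj j)) ({x \<in> measure_support (mu (rj j)). u x > b + \<epsilon>} \<inter> W)
        < ennreal \<delta>"
      using late[of "j - k"] by simp
  qed
  ultimately show "\<exists>j0 W. openin (top_of_set (closure D)) W \<and>
      {x \<in> measure_support mu0. a \<le> phis x \<and> phis x < b} \<subseteq> W \<and>
      (\<forall>j\<ge>j0. outer_measure_of (mu (rj j)) ({x \<in> measure_support (mu (rj j)). u x < a - \<epsilon>} \<inter> W)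
        + outer_measure_of (mu (rj j)) ({x \<in> measure_support (mu (rj j)). u x > b + \<epsilon>} \<inter> W)
        < ennreal \<delta>)"
    by blast
qed

(* Radial limits give a.e. convergence of u along the hit points, since the hitting
   times tend to 0 from above. *)
lemma radial_limit_along_hit_points:
  fixes D :: "'a::euclidean_space set" and u ub :: "'a \<Rightarrow> real"
  assumes S: "standing_setting D Dr mu mu0" and R: "radial_map Dr mu mu0 v eps0"
    and radial: "AE \<zeta> in mu0. \<zeta> \<in> measure_support mu0 \<longrightarrow> ((\<lambda>t. u (v \<zeta> t)) \<longlongrightarrow> ub \<zeta>) (at_right 0)"
    and s: "filterlim s (at_left 0) sequentially"
  shows "AE \<zeta> in mu0. \<zeta> \<in> measure_support mu0 \<longrightarrow>
    (\<lambda>j. u (hit_point Dr v eps0 (s j) \<zeta>)) \<longlonglongrightarrow> ub \<zeta>"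
  using radial
proof eventually_elim
  case (elim \<zeta>)
  show ?case
  proof
    assume \<zeta>: "\<zeta> \<in> measure_support mu0"
    obtain r0 where "r0 < 0" and hit: "\<And>r. r \<in> {r0<..<0} \<Longrightarrow> hit_time Dr v eps0 r \<zeta> \<in> {0<..<eps0}"
      using radial_map_hit_points[OF S R] \<zeta> by blast
    from tendsto_uniform_limitI[OF radial_map_curves(4)[OF R] \<zeta>]
    have "((\<lambda>j. hit_time Dr v eps0 (s j) \<zeta>) \<longlongrightarrow> 0) sequentially"
      by (rule filterlim_compose[OF _ s])
    moreover have "\<forall>\<^sub>F j in sequentially. hit_time Dr v eps0 (s j) \<zeta> > 0"
      using eventually_compose_filterlim[OF eventually_at_left_real[OF \<open>r0 < 0\<close>] s]
      by eventually_elim (use hit in auto)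
    ultimately have "filterlim (\<lambda>j. hit_time Dr v eps0 (s j) \<zeta>) (at_right 0) sequentially"
      by (rule tendsto_imp_filterlim_at_right)
    from filterlim_compose[OF elim[rule_format, OF \<zeta>] this]
    show "(\<lambda>j. u (hit_point Dr v eps0 (s j) \<zeta>)) \<longlonglongrightarrow> ub \<zeta>" by (simp add: hit_point_def)
  qed
qed

(* The theorem for a single sequence of levels: after dropping finitely many levels,
   the hit points satisfy all hypotheses of the abstract transport lemma. *)
lemma radial_limits_give_strong_limit_values:
  fixes D :: "'a::euclidean_space set" and u ub :: "'a \<Rightarrow> real"
  assumes S: "standing_setting D Dr mu mu0" and R: "radial_map Dr mu mu0 v eps0"
    and u: "u \<in> borel_measurable (restrict_space borel D)" and ub: "ub \<in> borel_measurable borel"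
    and radial: "AE \<zeta> in mu0. \<zeta> \<in> measure_support mu0 \<longrightarrow> ((\<lambda>t. u (v \<zeta> t)) \<longlongrightarrow> ub \<zeta>) (at_right 0)"
    and rj: "\<And>j. rj j < 0" "rj \<longlonglongrightarrow> 0"
  shows "has_strong_limit_values D mu mu0 rj (\<lambda>j. u) ub"
proof -
  define K where "K = measure_support mu0"
  obtain r0 where "r0 < 0"
    and hit: "\<And>r \<zeta>. r \<in> {r0<..<0} \<Longrightarrow> \<zeta> \<in> K \<Longrightarrow>
      hit_time Dr v eps0 r \<zeta> \<in> {0<..<eps0} \<and> hit_point Dr v eps0 r \<zeta> \<in> frontier (Dr r)"
    and cont: "\<And>r. r \<in> {r0<..<0} \<Longrightarrow> continuous_on K (hit_point Dr v eps0 r)"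
    using radial_map_hit_points[OF S R, folded K_def] by blast
  obtain k where k: "\<And>j. j \<ge> k \<Longrightarrow> r0 < rj j"
    using order_tendstoD(1)[OF rj(2) \<open>r0 < 0\<close>] by (auto simp: eventually_sequentially)
  define s where "s j = rj (j + k)" for j
  have s_in: "s j \<in> {r0<..<0}" for j using k rj(1) by (simp add: s_def)
  have s_lim: "filterlim s (at_left 0) sequentially"
    unfolding s_def using rj by (intro tendsto_imp_filterlim_at_left LIMSEQ_ignore_initial_segment) auto
  have inside: "frontier (Dr (s j)) \<subseteq> D" for j
    using standing_setting_frontier_inside[OF S] s_in by auto
  have mu_s: "sets (mu (s j)) = sets borel" "measure_support (mu (s j)) \<subseteq> frontier (Dr (s j))" for j
    using S s_in unfolding standing_setting_def by auto
  obtain c where "c > 0" and transport: "\<And>E \<eta>. E \<in> sets borel \<Longrightarrow> E \<subseteq> K \<Longrightarrow>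
      ennreal c * emeasure mu0 E < \<eta> \<Longrightarrow>
      \<forall>\<^sub>F r in at_left 0. outer_measure_of (mu r) (hit_point Dr v eps0 r ` E) < \<eta>"
    using radial_map_transport[OF R, folded K_def] by blast
  have "has_strong_limit_values D mu mu0 s (\<lambda>j. u) ub"
  proof (rule strong_limit_values_from_transport
      [OF K_def, where P="\<lambda>j. hit_point Dr v eps0 (s j)" and F="\<lambda>j. frontier (Dr (s j))" and c=c])
    show "sets mu0 = sets borel" "finite_measure mu0" using S unfolding standing_setting_def by auto
    show "compact K" "K \<subseteq> closure D" "frontier (Dr (s j)) \<inter> K = {}" for j
      using standing_setting_boundary_support[OF S] inside[of j] unfolding K_def by auto
    show "closed (frontier (Dr (s j)))" for j by simp
    show "hit_point Dr v eps0 (s j) ` K \<subseteq> frontier (Dr (s j))" for j using hit[OF s_in] by auto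
    show "space (mu (s j)) = UNIV" for j using sets_eq_imp_space_eq[OF mu_s(1)] by simp
    show "\<forall>\<^sub>F j in sequentially. \<forall>\<zeta>\<in>K. dist (hit_point Dr v eps0 (s j) \<zeta>) \<zeta> < \<rho>" if "\<rho> > 0" for \<rho>
      using eventually_compose_filterlim[OF radial_map_hit_points_uniform[OF S R that] s_lim]
      unfolding K_def .
    show "(\<lambda>\<zeta>. u (hit_point Dr v eps0 (s j) \<zeta>)) \<in> borel_measurable (restrict_space borel K)" for j
      by (rule measurable_comp_continuous_restrict[OF cont[OF s_in] _ u])
        (use hit[OF s_in] inside in blast)
    show "AE \<zeta> in mu0. \<zeta> \<in> K \<longrightarrow> (\<lambda>j. u (hit_point Dr v eps0 (s j) \<zeta>)) \<longlonglongrightarrow> ub \<zeta>"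
      using radial_limit_along_hit_points[OF S R radial s_lim] unfolding K_def .
    show "\<forall>\<^sub>F j in sequentially. outer_measure_of (mu (s j)) (hit_point Dr v eps0 (s j) ` E) < \<eta>"
      if "E \<in> sets borel" "E \<subseteq> K" "ennreal c * emeasure mu0 E < \<eta>" for E \<eta>
      using eventually_compose_filterlim[OF transport[OF that] s_lim] .
    show "\<forall>\<^sub>F j in sequentially.
        outer_measure_of (mu (s j)) (frontier (Dr (s j)) - hit_point Dr v eps0 (s j) ` K) < \<eta>"
      if "\<eta> > 0" for \<eta>
      using eventually_compose_filterlim[OF radial_map_missed[OF R that] s_lim] unfolding K_def .
    show "c > 0" "ub \<in> borel_measurable borel" by (fact \<open>c > 0\<close> ub)+
    show "measure_support (mu (s j)) \<subseteq> frontier (Dr (s j))" for j by (fact mu_s(2))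
  qed
  then show ?thesis unfolding s_def by (rule has_strong_limit_values_shift)
qed

(* Main theorem: replace ut by a Borel function equal to it mu0-a.e. and apply the
   single-sequence result to every admissible sequence of levels. *)
theorem theorem5p5:
  fixes D :: "'a::euclidean_space set" and Dr :: "real \<Rightarrow> 'a set"
    and mu :: "real \<Rightarrow> 'a measure" and mu0 :: "'a measure"
    and v :: "'a \<Rightarrow> real \<Rightarrow> 'a" and eps0 :: real
    and u ut :: "'a \<Rightarrow> real"
  assumes "standing_setting D Dr mu mu0"
    and "radial_map Dr mu mu0 v eps0"
    and "u \<in> borel_measurable (restrict_space borel D)"
    and "ut \<in> borel_measurable (completion mu0)"
    and "has_radial_limits mu0 v u ut"
  shows "has_boundary_values D mu mu0 u ut"
proof -
  obtain ub where ub: "ub \<in> borel_measurable mu0" and ae: "AE x in mu0. ut x = ub x"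
    using completion_ex_borel_measurable_real[OF assms(4)] by blast
  have mu0_sets: "sets mu0 = sets borel" using assms(1) unfolding standing_setting_def by blast
  have ub_borel: "ub \<in> borel_measurable borel"
    using ub unfolding measurable_cong_sets[OF mu0_sets refl] .
  have radial: "AE \<zeta> in mu0. \<zeta> \<in> measure_support mu0 \<longrightarrow> ((\<lambda>t. u (v \<zeta> t)) \<longlongrightarrow> ub \<zeta>) (at_right 0)"
    using assms(5) ae unfolding has_radial_limits_def by eventually_elim auto
  show ?thesis unfolding has_boundary_values_def
  proof (intro allI impI)
    fix rj :: "nat \<Rightarrow> real" assume "incseq rj \<and> (\<forall>j. rj j < 0) \<and> rj \<longlonglongrightarrow> 0"
    then have "has_strong_limit_values D mu mu0 rj (\<lambda>j. u) ub"
      by (intro radial_limits_give_strong_limit_values[OF assms(1-3) ub_borel radial]) auto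
    moreover have "AE x in mu0. ub x = ut x" using ae by auto
    ultimately show "\<exists>phis. has_strong_limit_values D mu mu0 rj (\<lambda>j. u) phis \<and> (AE x in mu0. phis x = ut x)"
      by blast
  qed
qed

end
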